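(* For all names $\vec u,\vec v,\vec w$ (of degrees $\ge1$): $\vec u\dotplus\vec v=\vec u\dotplus\vec w$ if and only if $\vec v=\vec w$, and $\vec v\dotplus\vec u=\vec w\dotplus\vec u$ if and only if $\vec v=\vec w$.
   Context: $\hat N^n$ ($n\ge1$) is the set of names of planar rooted binary trees with $n$ internal vertices: writing a tree as a complete expression (full binary parenthesization, outermost product included) of $x_1\cdots x_{n+1}$, its name $\vec v\in\mathbb N^n$ has $v_i=i$ if at least one left parenthesis stands immediately left of $x_i$, and otherwise $v_i=j$ where the rightmost of the right parentheses immediately following $x_i$ matches a left parenthesis in the run immediately preceding $x_j$. For $\vec v\in\hat N^n,\vec w\in\hat N^m$: $\vec v\nearrow\vec w=(\vec v,n\triangleright w_1,\dots,n\triangleright w_m)$ with $n\triangleright a=a+n$ for $a\neq1$, $n\triangleright1=1$; $\vec v\nwarrow\vec w=(v_1,\dots,v_n,w_1+n,\dots,w_m+n)$. The dendriform addition is the set (grove) $\vec v\dotplus\vec w=\{\vec t\in\hat N^{n+m}:\ \vec v\nearrow\vec w\le\vec t\le\vec v\nwarrow\vec w\}$, with componentwise order. *)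

theory Defs
  imports Main
begin

text \<open>Planar rooted binary trees; leaves are read left to right as x_1, ..., x_(n+1).\<close>
datatype btree = Leaf | Node btree btree

fun internal :: "btree \<Rightarrow> nat" where
  "internal Leaf = 0"
| "internal (Node l r) = Suc (internal l + internal r)"

fun leaves :: "btree \<Rightarrow> nat" where
  "leaves Leaf = 1"
| "leaves (Node l r) = leaves l + leaves r"

text \<open>Matching parenthesis pairs of the complete expression: each internal vertex gives a pair
  (a,b) meaning its left parenthesis stands (in the run) immediately before x_a and its right
  parenthesis (in the run) immediately after x_b. Leaves are numbered starting from k.\<close>
fun parens :: "btree \<Rightarrow> nat \<Rightarrow> (nat \<times> nat) set" where
  "parens Leaf k = {}"
| "parens (Node l r) k =
     insert (k, k + leaves l + leaves r - 1) (parens l k \<union> parens r (k + leaves l))"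

text \<open>The name of a tree: v_i = i if a left parenthesis stands immediately left of x_i;
  otherwise v_i = j where the rightmost right parenthesis following x_i (which closes the
  largest parenthesised sub-expression ending at x_i) matches a left parenthesis before x_j.\<close>
definition tree_name :: "btree \<Rightarrow> nat list" where
  "tree_name t = map (\<lambda>i. if (\<exists>b. (i, b) \<in> parens t 1) then i
                          else Min {a. (a, i) \<in> parens t 1}) [1..<internal t + 1]"

definition names :: "nat \<Rightarrow> nat list set" where
  "names n = {tree_name t | t. internal t = n}"

definition le_name :: "nat list \<Rightarrow> nat list \<Rightarrow> bool" where
  "le_name v w = list_all2 (\<le>) v w"

definition tri :: "nat \<Rightarrow> nat \<Rightarrow> nat" where
  "tri n a = (if a = 1 then 1 else a + n)"

definition nearrow :: "nat list \<Rightarrow> nat list \<Rightarrow> nat list" where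
  "nearrow v w = v @ map (tri (length v)) w"

definition nwarrow :: "nat list \<Rightarrow> nat list \<Rightarrow> nat list" where
  "nwarrow v w = v @ map (\<lambda>a. a + length v) w"

definition dplus :: "nat list \<Rightarrow> nat list \<Rightarrow> nat list set" where
  "dplus v w = {t \<in> names (length v + length w).
                  le_name (nearrow v w) t \<and> le_name t (nwarrow v w)}"

end

theory Submission
  imports Defs
begin

text \<open>The upper end \<open>nwarrow v w\<close> of the interval defining \<open>dplus v w\<close> is itself a name:
  that of the tree obtained by grafting the tree of \<open>w\<close> onto the rightmost leaf of the tree
  of \<open>v\<close>. So it is the greatest element of the grove, hence determined by it, and
  \<open>nwarrow v w = v @ map (\<lambda>a. a + length v) w\<close> can be cancelled on either side.\<close>

fun graft_rightmost :: "btree \<Rightarrow> btree \<Rightarrow> btree" where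
  "graft_rightmost Leaf s = s"
| "graft_rightmost (Node l r) s = Node l (graft_rightmost r s)"

lemma leaves_pos: "leaves t \<ge> 1"
  by (induction t) auto

lemma leaves_eq_internal_Suc: "leaves t = internal t + 1"
  by (induction t) auto

lemma internal_graft_rightmost:
  "internal (graft_rightmost t s) = internal t + internal s"
  by (induction t) auto

lemma leaves_graft_rightmost:
  "leaves (graft_rightmost t s) = leaves t + leaves s - 1"
  by (simp add: leaves_eq_internal_Suc internal_graft_rightmost)

lemma parens_range:
  "(a, b) \<in> parens t k \<Longrightarrow> k \<le> a \<and> a < b \<and> b \<le> k + leaves t - 1"
proof (induction t arbitrary: k)
  case (Node l r)
  from Node.prems show ?case
    using Node.IH(1)[of k] Node.IH(2)[of "k + leaves l"] leaves_pos[of l] leaves_pos[of r]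
    by auto
qed simp

lemma finite_parens: "finite (parens t k)"
  by (induction t arbitrary: k) auto

definition shift_pairs :: "nat \<Rightarrow> (nat \<times> nat) set \<Rightarrow> (nat \<times> nat) set" where
  "shift_pairs d P = (\<lambda>(a, b). (a + d, b + d)) ` P"

lemma parens_shift: "parens t (k + d) = shift_pairs d (parens t k)"
  unfolding shift_pairs_def
proof (induction t arbitrary: k)
  case (Node l r)
  have assoc: "k + d + leaves l = (k + leaves l) + d"
    and root: "k + leaves l + d + leaves r - Suc 0 = k + leaves l + leaves r + d - Suc 0"
    by simp_all
  show ?case
    using leaves_pos[of l] leaves_pos[of r] by (simp add: Node.IH assoc root image_Un)
qed simp

lemma parens_endpoint_exists:
  assumes "t \<noteq> Leaf" "k \<le> j" "j < k + leaves t"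
  shows "(\<exists>b. (j, b) \<in> parens t k) \<or> (\<exists>a. (a, j) \<in> parens t k)"
  using assms
proof (induction t arbitrary: k)
  case (Node l r)
  consider "j < k + leaves l" "l = Leaf" | "j < k + leaves l" "l \<noteq> Leaf"
    | "j \<ge> k + leaves l" "r = Leaf" | "j \<ge> k + leaves l" "r \<noteq> Leaf"
    by linarith
  then show ?case
  proof cases
    case 1
    with Node.prems have "j = k" by simp
    then show ?thesis by auto
  next
    case 2
    then show ?thesis using Node.IH(1)[of k] Node.prems by auto
  next
    case 3
    with Node.prems have "j = k + leaves l + leaves r - 1" by simp
    then show ?thesis by auto
  next
    case 4
    then show ?thesis using Node.IH(2)[of "k + leaves l"] Node.prems by auto
  qed
qed simp

text \<open>The right parentheses standing after the last leaf of \<open>t\<close> move to after the last leaf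
  of \<open>s\<close>.\<close>
lemma parens_graft_rightmost:
  "parens (graft_rightmost t s) k =
     (\<lambda>(a, b). (a, (id(k + leaves t - 1 := k + leaves t + leaves s - 2)) b)) ` parens t k
     \<union> parens s (k + leaves t - 1)"
proof (induction t arbitrary: k)
  case (Node l r)
  have pos: "leaves l \<ge> 1" "leaves r \<ge> 1" "leaves s \<ge> 1" using leaves_pos by auto
  define e where "e = k + leaves l + leaves r - 1"
  define e' where "e' = k + leaves l + leaves r + leaves s - 2"
  let ?f = "\<lambda>(a, b). (a, (id(e := e')) b)"
  have "?f p = p" if "p \<in> parens l k" for p
    using that parens_range[of "fst p" "snd p" l k] pos by (cases p) (auto simp: e_def)
  then have left: "?f ` parens l k = parens l k"
    by (simp add: image_cong)
  have root: "?f (k, e) = (k, k + leaves l + leaves (graft_rightmost r s) - 1)"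
    using pos by (simp add: e_def e'_def leaves_graft_rightmost)
  have "parens (graft_rightmost (Node l r) s) k
      = insert (?f (k, e)) (?f ` parens l k \<union> (?f ` parens r (k + leaves l)
          \<union> parens s (k + leaves l + leaves r - 1)))"
    unfolding root left by (simp add: Node.IH e_def e'_def add.assoc id_def)
  also have "\<dots> = ?f ` parens (Node l r) k \<union> parens s (k + leaves (Node l r) - 1)"
    by (simp add: image_Un Un_assoc e_def add.assoc)
  finally show ?case by (simp add: e_def e'_def add.assoc id_def)
qed simp

definition name_entry :: "(nat \<times> nat) set \<Rightarrow> nat \<Rightarrow> nat" where
  "name_entry P i = (if \<exists>b. (i, b) \<in> P then i else Min {a. (a, i) \<in> P})"

lemma tree_name_eq_map_name_entry:
  "tree_name t = map (name_entry (parens t 1)) [1..<internal t + 1]"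
  unfolding tree_name_def name_entry_def by simp

lemma name_entry_cong:
  assumes "(\<exists>b. (i, b) \<in> P) \<longleftrightarrow> (\<exists>b. (i, b) \<in> Q)"
    and "\<And>a. (a, i) \<in> P \<longleftrightarrow> (a, i) \<in> Q"
  shows "name_entry P i = name_entry Q i"
  unfolding name_entry_def using assms by simp

lemma name_entry_shift:
  assumes "finite P" "(\<exists>b. (i, b) \<in> P) \<or> (\<exists>a. (a, i) \<in> P)"
  shows "name_entry (shift_pairs d P) (i + d) = name_entry P i + d"
proof (cases "\<exists>b. (i, b) \<in> P")
  case True
  then show ?thesis by (force simp: name_entry_def shift_pairs_def)
next
  case False
  let ?A = "{a. (a, i) \<in> P}"
  have shifted: "{a. (a, i + d) \<in> shift_pairs d P} = (\<lambda>a. a + d) ` ?A"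
    by (force simp: shift_pairs_def)
  have "finite ?A"
    using finite_subset[of ?A "fst ` P"] assms(1) by force
  moreover have "?A \<noteq> {}" using False assms(2) by simp
  ultimately have "Min ((\<lambda>a. a + d) ` ?A) = Min ?A + d"
    using mono_Min_commute[of "\<lambda>a. a + d" ?A] by (simp add: mono_def)
  moreover have "\<not> (\<exists>b. (i + d, b) \<in> shift_pairs d P)"
    using False by (auto simp: shift_pairs_def)
  ultimately show ?thesis using False by (simp add: name_entry_def shifted)
qed

lemma parens_graft_rightmost_1:
  "parens (graft_rightmost t s) 1 =
     (\<lambda>(a, b). (a, (id(internal t + 1 := internal t + internal s + 1)) b)) ` parens t 1
     \<union> shift_pairs (internal t) (parens s 1)"
  using parens_graft_rightmost[of t s 1] parens_shift[of s 1 "internal t"]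
  by (simp add: leaves_eq_internal_Suc add.commute)

lemma mem_parens_graft_rightmost_1:
  "(a, b) \<in> parens (graft_rightmost t s) 1 \<longleftrightarrow>
     (\<exists>b'. (a, b') \<in> parens t 1 \<and> b = (id(internal t + 1 := internal t + internal s + 1)) b')
     \<or> (a, b) \<in> shift_pairs (internal t) (parens s 1)"
  unfolding parens_graft_rightmost_1 by force

lemma name_entry_graft_rightmost_left:
  assumes "1 \<le> i" "i \<le> internal t"
  shows "name_entry (parens (graft_rightmost t s) 1) i = name_entry (parens t 1) i"
proof (rule name_entry_cong)
  have s_shifted: "a > internal t" "b > internal t + 1"
    if "(a, b) \<in> shift_pairs (internal t) (parens s 1)" for a b
    using that parens_range[of "a - internal t" "b - internal t" s 1]
    by (auto simp: shift_pairs_def)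
  show "(\<exists>b. (i, b) \<in> parens (graft_rightmost t s) 1) \<longleftrightarrow> (\<exists>b. (i, b) \<in> parens t 1)"
  proof
    assume "\<exists>b. (i, b) \<in> parens (graft_rightmost t s) 1"
    then obtain b where "(i, b) \<in> parens (graft_rightmost t s) 1" ..
    moreover have "(i, b) \<notin> shift_pairs (internal t) (parens s 1)"
      using assms s_shifted(1) by fastforce
    ultimately show "\<exists>b. (i, b) \<in> parens t 1"
      unfolding mem_parens_graft_rightmost_1 by blast
  next
    assume "\<exists>b. (i, b) \<in> parens t 1"
    then show "\<exists>b. (i, b) \<in> parens (graft_rightmost t s) 1"
      unfolding mem_parens_graft_rightmost_1 by blast
  qed
  show "(a, i) \<in> parens (graft_rightmost t s) 1 \<longleftrightarrow> (a, i) \<in> parens t 1" for a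
    unfolding mem_parens_graft_rightmost_1 using assms s_shifted by fastforce
qed

lemma name_entry_graft_rightmost_right:
  assumes "1 \<le> j" "j \<le> internal s"
  shows "name_entry (parens (graft_rightmost t s) 1) (j + internal t)
       = name_entry (parens s 1) j + internal t"
proof -
  have t_left: "a \<le> internal t" "b \<le> internal t + 1" if "(a, b) \<in> parens t 1" for a b
    using that parens_range[of a b t 1] leaves_eq_internal_Suc[of t] by auto
  have "name_entry (parens (graft_rightmost t s) 1) (j + internal t)
      = name_entry (shift_pairs (internal t) (parens s 1)) (j + internal t)"
  proof (rule name_entry_cong)
    show "(\<exists>b. (j + internal t, b) \<in> parens (graft_rightmost t s) 1) \<longleftrightarrow>
          (\<exists>b. (j + internal t, b) \<in> shift_pairs (internal t) (parens s 1))"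
      unfolding mem_parens_graft_rightmost_1 using assms t_left by fastforce
    show "(a, j + internal t) \<in> parens (graft_rightmost t s) 1 \<longleftrightarrow>
          (a, j + internal t) \<in> shift_pairs (internal t) (parens s 1)" for a
      unfolding mem_parens_graft_rightmost_1 using assms t_left by fastforce
  qed
  also have "\<dots> = name_entry (parens s 1) j + internal t"
  proof (rule name_entry_shift[OF finite_parens])
    have "s \<noteq> Leaf" using assms by auto
    then show "(\<exists>b. (j, b) \<in> parens s 1) \<or> (\<exists>a. (a, j) \<in> parens s 1)"
      using assms by (intro parens_endpoint_exists) (auto simp: leaves_eq_internal_Suc)
  qed
  finally show ?thesis .
qed

lemma tree_name_graft_rightmost:
  "tree_name (graft_rightmost t s) = tree_name t @ map (\<lambda>a. a + internal t) (tree_name s)"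
proof -
  let ?n = "internal t" and ?m = "internal s"
  have positions: "[1..<?n + ?m + 1] = [1..<?n + 1] @ map (\<lambda>j. j + ?n) [1..<?m + 1]"
    by (rule nth_equalityI) (auto simp: nth_append)
  have "tree_name (graft_rightmost t s)
      = map (name_entry (parens (graft_rightmost t s) 1)) [1..<?n + ?m + 1]"
    by (simp only: tree_name_eq_map_name_entry internal_graft_rightmost)
  also have "\<dots> = map (name_entry (parens (graft_rightmost t s) 1)) [1..<?n + 1]
      @ map (\<lambda>j. name_entry (parens (graft_rightmost t s) 1) (j + ?n)) [1..<?m + 1]"
    by (simp only: positions map_append map_map comp_def)
  also have "map (name_entry (parens (graft_rightmost t s) 1)) [1..<?n + 1]
      = map (name_entry (parens t 1)) [1..<?n + 1]"
    by (intro map_cong refl name_entry_graft_rightmost_left) auto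
  also have "map (\<lambda>j. name_entry (parens (graft_rightmost t s) 1) (j + ?n)) [1..<?m + 1]
      = map (\<lambda>j. name_entry (parens s 1) j + ?n) [1..<?m + 1]"
    by (intro map_cong refl name_entry_graft_rightmost_right) auto
  finally show ?thesis
    by (simp only: tree_name_eq_map_name_entry map_map comp_def)
qed

lemma length_names: "v \<in> names n \<Longrightarrow> length v = n"
  by (auto simp: names_def tree_name_def)

lemma nwarrow_in_names:
  assumes "v \<in> names n" "w \<in> names m"
  shows "nwarrow v w \<in> names (n + m)"
proof -
  obtain t s where t: "v = tree_name t" "internal t = n" and s: "w = tree_name s" "internal s = m"
    using assms by (auto simp: names_def)
  have "nwarrow v w = tree_name (graft_rightmost t s)"
    using length_names[OF assms(1)] by (simp add: nwarrow_def tree_name_graft_rightmost t s)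
  moreover have "internal (graft_rightmost t s) = n + m"
    by (simp add: internal_graft_rightmost t s)
  ultimately show ?thesis by (auto simp: names_def)
qed

lemma le_name_nearrow_nwarrow: "le_name (nearrow v w) (nwarrow v w)"
  by (auto simp: le_name_def nearrow_def nwarrow_def list_all2_conv_all_nth nth_append tri_def)

lemma le_name_antisym: "le_name v w \<Longrightarrow> le_name w v \<Longrightarrow> v = w"
  by (auto simp: le_name_def list_all2_conv_all_nth intro!: nth_equalityI intro: order.antisym)

lemma nwarrow_greatest_in_dplus:
  assumes "v \<in> names n" "w \<in> names m"
  shows "nwarrow v w \<in> dplus v w" "\<And>x. x \<in> dplus v w \<Longrightarrow> le_name x (nwarrow v w)"
proof -
  have "le_name (nwarrow v w) (nwarrow v w)"
    by (simp add: le_name_def list_all2_refl)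
  then show "nwarrow v w \<in> dplus v w"
    using nwarrow_in_names[OF assms] length_names[OF assms(1)] length_names[OF assms(2)]
    by (simp add: dplus_def le_name_nearrow_nwarrow)
  show "le_name x (nwarrow v w)" if "x \<in> dplus v w" for x
    using that by (simp add: dplus_def)
qed

lemma dplus_eq_imp_nwarrow_eq:
  assumes "v \<in> names n" "w \<in> names m" "v' \<in> names n'" "w' \<in> names m'"
    and "dplus v w = dplus v' w'"
  shows "nwarrow v w = nwarrow v' w'"
  using nwarrow_greatest_in_dplus[OF assms(1,2)] nwarrow_greatest_in_dplus[OF assms(3,4)] assms(5)
  by (metis le_name_antisym)

lemma nwarrow_cancel_left: "nwarrow u v = nwarrow u w \<Longrightarrow> v = w"
  by (simp add: nwarrow_def inj_map_eq_map inj_on_def)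

lemma nwarrow_cancel_right: "nwarrow v u = nwarrow w u \<Longrightarrow> v = w"
  by (metis nwarrow_def append_eq_append_conv length_append length_map add_right_cancel)

theorem mainTheorem14:
  fixes u v w :: "nat list" and n m k :: nat
  assumes "n \<ge> 1" "m \<ge> 1" "k \<ge> 1"
    and "u \<in> names n" "v \<in> names m" "w \<in> names k"
  shows "(dplus u v = dplus u w \<longleftrightarrow> v = w) \<and> (dplus v u = dplus w u \<longleftrightarrow> v = w)"
  using dplus_eq_imp_nwarrow_eq[OF assms(4,5,4,6)] dplus_eq_imp_nwarrow_eq[OF assms(5,4,6,4)]
    nwarrow_cancel_left nwarrow_cancel_right
  by blast

end
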